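(* Let $p$ be a prime number. Define integers $x_0,\ldots,x_{4p-1}$ by $x_k=kp+\left(\tfrac{k(k+1)}{2}\bmod p\right)$ and $x_{k+2p}=x_k+p$ for $k=0,\ldots,2p-1$. Then $\{x_i-x_j\mid i,j=0,\ldots,4p-1\}\supseteq\{x\in\mathbb{Z}\mid |x|<p^2\}$.
   Context: $a\bmod p$ denotes the remainder of $a$ in $\{0,\ldots,p-1\}$. *)

theory Defs
  imports "HOL-Computational_Algebra.Primes"
begin

definition xseq :: "int \<Rightarrow> nat \<Rightarrow> int" where
  "xseq p i = (if i < 2 * nat p
      then int i * p + ((int i * (int i + 1) div 2) mod p)
      else (int (i - 2 * nat p) * p + ((int (i - 2 * nat p) * (int (i - 2 * nat p) + 1) div 2) mod p)) + p)"

end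

theory Submission
  imports Defs "HOL-Number_Theory.Cong"
begin

text \<open>Let \<open>T m = m (m + 1) / 2\<close>, so \<open>x k = k p + (T k mod p)\<close> for \<open>k < 2 p\<close>. As
  \<open>T (l + d) = T l + d l + T d\<close>, the difference \<open>x (l + d) - x l\<close> is \<open>d p + \<delta>\<close> with
  \<open>|\<delta>| < p\<close> and \<open>\<delta> \<equiv> d l + T d (mod p)\<close>. For \<open>0 < d < p\<close> this residue is an arbitrary
  \<open>b\<close> for a suitable \<open>l < p\<close>, so \<open>\<delta>\<close> is \<open>b\<close> or \<open>b - p\<close>. To hit \<open>x = a p + b\<close> with
  \<open>0 < a < p\<close> take \<open>d = a\<close> and, if \<open>\<delta> = b - p\<close>, replace the minuend by its copy in the
  second half of the sequence, which is larger by \<open>p\<close>; for \<open>a = 0\<close> take \<open>d = 1\<close> and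
  shift the subtrahend instead.\<close>

definition triangle :: "int \<Rightarrow> int" where
  "triangle m = m * (m + 1) div 2"

lemma triangle_add: "triangle (l + d) = triangle l + d * l + triangle d"
proof -
  have "(l + d) * (l + d + 1) = 2 * (d * l) + (l * (l + 1) + d * (d + 1))"
    by (simp add: algebra_simps)
  then show ?thesis
    unfolding triangle_def by (simp add: div_plus_div_distrib_dvd_left)
qed

lemma xseq_below:
  "k < 2 * nat p \<Longrightarrow> xseq p k = int k * p + triangle (int k) mod p"
  by (simp add: xseq_def triangle_def)

lemma xseq_shift:
  "k < 2 * nat p \<Longrightarrow> xseq p (k + 2 * nat p) = xseq p k + p"
  by (simp add: xseq_def)

lemma diff_of_residues_cases:
  fixes r s p :: int
  assumes "0 \<le> r" "r < p" "0 \<le> s" "s < p"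
  shows "r - s = (r - s) mod p \<or> r - s = (r - s) mod p - p"
proof (cases "s \<le> r")
  case True
  then show ?thesis using assms by simp
next
  case False
  then have "(r - s) mod p = (r - s + p) mod p"
    by simp
  also have "\<dots> = r - s + p"
    using False assms by (intro mod_pos_pos_trivial) auto
  finally show ?thesis by simp
qed

lemma cong_solve_coprime_residue_int:
  fixes a b n :: int
  assumes "coprime a n" "0 < n"
  obtains x where "0 \<le> x" "x < n" "[a * x = b] (mod n)"
proof -
  obtain y where y: "[a * y = b] (mod n)"
    using cong_solve_dvd_int[of a n b] assms(1) by auto
  have "[a * (y mod n) = a * y] (mod n)"
    by (simp add: cong_def mod_mult_right_eq)
  with y show ?thesis
    using that[of "y mod n"] assms(2) cong_trans by auto
qed

lemma xseq_diff_near_multiple: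
  fixes p d b :: int
  assumes "prime p" "0 < d" "d < p"
  obtains k l where "k < 2 * nat p" "l < 2 * nat p"
    "xseq p k - xseq p l = d * p + b mod p \<or> xseq p k - xseq p l = d * p + b mod p - p"
proof -
  have "\<not> p dvd d"
    using assms(2,3) zdvd_imp_le by fastforce
  then have "coprime d p"
    using assms(1) prime_imp_coprime coprime_commute by blast
  then obtain l where l: "0 \<le> l" "l < p" "[d * l = b - triangle d] (mod p)"
    using cong_solve_coprime_residue_int assms(1) prime_gt_0_int by blast
  define k where "k = l + d"
  define \<delta> where "\<delta> = triangle k mod p - triangle l mod p"
  have diff: "xseq p (nat k) - xseq p (nat l) = d * p + \<delta>"
    using l assms(2,3) by (simp add: xseq_below k_def \<delta>_def algebra_simps)
  have "[\<delta> = triangle k - triangle l] (mod p)"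
    unfolding \<delta>_def by (simp add: cong_def mod_diff_eq)
  also have "triangle k - triangle l = d * l + triangle d"
    by (simp add: k_def triangle_add)
  also have "[\<dots> = b] (mod p)"
    using cong_add[OF l(3) cong_refl[of "triangle d"]] by simp
  finally have "\<delta> mod p = b mod p"
    by (simp add: cong_def)
  moreover have "\<delta> = \<delta> mod p \<or> \<delta> = \<delta> mod p - p"
    unfolding \<delta>_def using assms(1) prime_gt_0_int
    by (intro diff_of_residues_cases) auto
  ultimately have "\<delta> = b mod p \<or> \<delta> = b mod p - p"
    by auto
  moreover have "nat k < 2 * nat p" "nat l < 2 * nat p"
    using l assms(2,3) by (auto simp: k_def)
  ultimately show thesis
    using that diff by auto
qed

lemma xseq_differences_cover_nonneg:
  fixes p x :: int
  assumes "prime p" "0 \<le> x" "x < p ^ 2"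
  shows "\<exists>i j. x = xseq p i - xseq p j \<and> i < 4 * nat p \<and> j < 4 * nat p"
proof -
  define a where "a = x div p"
  define b where "b = x mod p"
  have p: "2 \<le> p"
    using assms(1) prime_ge_2_int by blast
  have x: "x = a * p + b" and b: "0 \<le> b" "b mod p = b"
    using p by (simp_all add: a_def b_def)
  have "a * p < p * p"
    using x b assms(3) by (simp add: power2_eq_square)
  then have a: "0 \<le> a" "a < p"
    using assms(2) p by (auto simp: a_def pos_imp_zdiv_nonneg_iff)
  let ?n = "2 * nat p"
  have shift: "xseq p (k + ?n) = xseq p k + p" "k < 4 * nat p" "k + ?n < 4 * nat p"
    if "k < ?n" for k
    using that xseq_shift by auto
  show ?thesis
  proof (cases "a = 0")
    case True
    obtain k l where kl: "k < ?n" "l < ?n"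
      "xseq p k - xseq p l = p + b \<or> xseq p k - xseq p l = b"
      using xseq_diff_near_multiple[OF assms(1), of 1 b] p b by auto
    then consider "x = xseq p k - xseq p (l + ?n)" | "x = xseq p k - xseq p l"
      using x True shift(1)[of l] by force
    then show ?thesis
      using kl shift by metis
  next
    case False
    obtain k l where kl: "k < ?n" "l < ?n"
      "xseq p k - xseq p l = a * p + b \<or> xseq p k - xseq p l = a * p + b - p"
      using xseq_diff_near_multiple[OF assms(1), of a b] a False b by auto
    then consider "x = xseq p k - xseq p l" | "x = xseq p (k + ?n) - xseq p l"
      using x shift(1)[of k] by force
    then show ?thesis
      using kl shift by metis
  qed
qed

theorem theorem8:
  fixes p :: int
  assumes "prime p"
  shows "{x :: int. \<bar>x\<bar> < p ^ 2} \<subseteq> {xseq p i - xseq p j | i j. i < 4 * nat p \<and> j < 4 * nat p}"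
proof
  fix x :: int
  assume "x \<in> {x. \<bar>x\<bar> < p ^ 2}"
  then have "\<bar>x\<bar> < p ^ 2"
    by simp
  then consider "0 \<le> x" "x < p ^ 2" | "0 \<le> - x" "- x < p ^ 2"
    by linarith
  then show "x \<in> {xseq p i - xseq p j | i j. i < 4 * nat p \<and> j < 4 * nat p}"
  proof cases
    case 1
    then show ?thesis
      using xseq_differences_cover_nonneg[OF assms] by blast
  next
    case 2
    then obtain i j where "- x = xseq p i - xseq p j" "i < 4 * nat p" "j < 4 * nat p"
      using xseq_differences_cover_nonneg[OF assms] by blast
    then have "x = xseq p j - xseq p i \<and> j < 4 * nat p \<and> i < 4 * nat p"
      by simp
    then show ?thesis
      by blast
  qed
qed

end
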